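(* In the planted $k$-factor model with $p=\lambda/n$, assume $k\lambda\ge 1+\epsilon$ for some constant $\epsilon>0$. Then for every $\delta>0$ and every realization of $H^*$, $$\mathbb P\Big(|\mathcal H_{\rm good}(G)|\le \tfrac{k\lambda}{k\lambda-1}(k\lambda)^{\delta n}\ \Big|\ H^*\Big)\ge 1-(k\lambda)^{-\delta n/2}.$$
   Context: Planted $k$-factor model: fix an integer $k\ge1$ and $n$ with $kn$ even. A $k$-factor on $[n]$ is a $k$-regular simple graph with vertex set $[n]$, identified with its edge set; $\mathcal H$ is the set of all $k$-factors on $[n]$. Let $p=\lambda/n\in[0,1]$. Draw $H^*$ uniformly at random from $\mathcal H$ and, independently, $G_0\sim\mathcal G(n,p)$. The observed graph is $G=G_0\cup H^*$. For $H\in\mathcal H$, $\ell(H,H^* )=|H\triangle H^*|/(kn/2)$. For $\delta>0$, $\mathcal H_{\rm good}(G)=\{H\in\mathcal H:\ \ell(H,H^* )<2\delta/k,\ H\subseteq E(G)\}$. *)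

theory Defs
  imports "HOL-Probability.Probability"
begin

text \<open>Vertex set [n] is rendered as {0..<n}; an (undirected, simple) edge is a
  2-element set of vertices; a graph is identified with its edge set.\<close>

definition all_edges :: "nat \<Rightarrow> nat set set" where
  "all_edges n = {e. \<exists>u v. e = {u, v} \<and> u \<noteq> v \<and> u < n \<and> v < n}"

definition is_k_factor :: "nat \<Rightarrow> nat \<Rightarrow> nat set set \<Rightarrow> bool" where
  "is_k_factor n k H \<longleftrightarrow> H \<subseteq> all_edges n \<and> (\<forall>v<n. card {e\<in>H. v \<in> e} = k)"

definition k_factors :: "nat \<Rightarrow> nat \<Rightarrow> nat set set set" where
  "k_factors n k = {H. is_k_factor n k H}"

definition G_np :: "nat \<Rightarrow> real \<Rightarrow> nat set set pmf" where
  "G_np n p = map_pmf (\<lambda>f. {e \<in> all_edges n. f e})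
                      (Pi_pmf (all_edges n) False (\<lambda>_. bernoulli_pmf p))"

definition loss :: "nat \<Rightarrow> nat \<Rightarrow> nat set set \<Rightarrow> nat set set \<Rightarrow> real" where
  "loss n k H Hs = real (card ((H - Hs) \<union> (Hs - H))) / (real k * real n / 2)"

definition H_good :: "nat \<Rightarrow> nat \<Rightarrow> real \<Rightarrow> nat set set \<Rightarrow> nat set set \<Rightarrow> nat set set set" where
  "H_good n k \<delta> Hs G = {H \<in> k_factors n k. loss n k H Hs < 2 * \<delta> / real k \<and> H \<subseteq> G}"

end

theory Submission
  imports Defs
begin

text \<open>First-moment argument. A \<open>k\<close>-factor \<open>H\<close> lies in \<open>G\<^sub>0 \<union> H\<^sup>*\<close> iff \<open>H - H\<^sup>* \<subseteq> G\<^sub>0\<close>,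
  which has probability \<open>p\<^sup>d\<close> for \<open>d = |H - H\<^sup>*|\<close>. The graphs \<open>H - H\<^sup>*\<close> and \<open>H\<^sup>* - H\<close> have the
  same degree sequence, so \<open>H\<close> is determined by a \<open>d\<close>-subset of \<open>H\<^sup>*\<close> together with a graph
  of prescribed degrees with \<open>d\<close> edges; there are at most \<open>(2d-1)!! \<le> 2\<^sup>d d!\<close> of the latter, hence
  at most \<open>(kn)\<^sup>d\<close> factors at distance \<open>d\<close>. Good factors have \<open>d < \<delta>n/2\<close>, so the expected
  number of them is at most the geometric sum of \<open>(k\<lambda>)^d\<close> over \<open>d < \<delta>n/2\<close>, i.e. at most
  \<open>k\<lambda>/(k\<lambda>-1) (k\<lambda>)^(\<delta>n/2)\<close>, and Markov's inequality at the threshold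
  \<open>k\<lambda>/(k\<lambda>-1) (k\<lambda>)^(\<delta>n)\<close> gives the claim.\<close>

definition deg :: "nat set set \<Rightarrow> nat \<Rightarrow> nat" where
  "deg A v = card {e\<in>A. v \<in> e}"

lemma finite_all_edges: "finite (all_edges n)"
  by (rule finite_subset[of _ "Pow {..<n}"]) (auto simp: all_edges_def)

lemma card_edge: "e \<in> all_edges n \<Longrightarrow> card e = 2"
  by (auto simp: all_edges_def)

lemma edge_vertex_less: "e \<in> all_edges n \<Longrightarrow> v \<in> e \<Longrightarrow> v < n"
  by (auto simp: all_edges_def)

lemma edge_through_vertex:
  assumes "e \<in> all_edges n" "u \<in> e"
  obtains w where "e = {u, w}" "w \<noteq> u"
  using assms by (auto simp: all_edges_def)

lemma sum_deg_eq_twice_card: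
  assumes "A \<subseteq> all_edges n"
  shows "(\<Sum>v<n. deg A v) = 2 * card A"
proof -
  have fA: "finite A" using assms finite_all_edges by (rule finite_subset)
  have "(\<Sum>v<n. deg A v) = (\<Sum>v<n. \<Sum>e\<in>A. if v \<in> e then 1 else 0)"
    unfolding deg_def using fA by (simp add: sum.If_cases Int_def)
  also have "\<dots> = (\<Sum>e\<in>A. \<Sum>v<n. if v \<in> e then 1 else 0)"
    by (rule sum.swap)
  also have "\<dots> = (\<Sum>e\<in>A. 2)"
  proof (rule sum.cong[OF refl])
    fix e assume "e \<in> A"
    hence "e \<subseteq> {..<n}" "card e = 2" using assms edge_vertex_less card_edge by blast+
    thus "(\<Sum>v<n. if v \<in> e then 1 else 0) = (2::nat)"
      by (simp add: sum.If_cases Int_absorb1)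
  qed
  finally show ?thesis by simp
qed

lemma deg_pos_iff: "finite A \<Longrightarrow> 0 < deg A v \<longleftrightarrow> v \<in> \<Union>A"
  by (auto simp: deg_def card_gt_0_iff)

lemma deg_Diff_singleton:
  "finite A \<Longrightarrow> e \<in> A \<Longrightarrow> deg (A - {e}) v = deg A v - (if v \<in> e then 1 else 0)"
proof -
  assume "finite A" "e \<in> A"
  moreover have "{x\<in>A - {e}. v \<in> x} = {x\<in>A. v \<in> x} - {e}" by auto
  ultimately show ?thesis unfolding deg_def by (auto simp: card_Diff_singleton_if)
qed

lemma deg_Int_Diff: "finite A \<Longrightarrow> deg A v = deg (A \<inter> B) v + deg (A - B) v"
proof -
  assume "finite A"
  hence "card ({e\<in>A \<inter> B. v \<in> e} \<union> {e\<in>A - B. v \<in> e}) =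
      card {e\<in>A \<inter> B. v \<in> e} + card {e\<in>A - B. v \<in> e}"
    by (intro card_Un_disjoint) auto
  moreover have "{e\<in>A. v \<in> e} = {e\<in>A \<inter> B. v \<in> e} \<union> {e\<in>A - B. v \<in> e}" by auto
  ultimately show ?thesis unfolding deg_def by simp
qed

section \<open>Counting graphs with a prescribed degree sequence\<close>

definition graphs_with_degrees :: "nat \<Rightarrow> nat \<Rightarrow> (nat \<Rightarrow> nat) \<Rightarrow> nat set set set" where
  "graphs_with_degrees n d g = {A. A \<subseteq> all_edges n \<and> card A = d \<and> (\<forall>v<n. deg A v = g v)}"

lemma finite_graphs_with_degrees: "finite (graphs_with_degrees n d g)"
  by (rule finite_subset[of _ "Pow (all_edges n)"])
     (auto simp: graphs_with_degrees_def finite_all_edges)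

lemma Union_graphs_with_degrees:
  assumes "A \<in> graphs_with_degrees n d g"
  shows "\<Union>A = {v. v < n \<and> 0 < g v}"
proof -
  have A: "A \<subseteq> all_edges n" "\<forall>v<n. deg A v = g v"
    using assms by (auto simp: graphs_with_degrees_def)
  have "finite A" using A(1) finite_all_edges by (rule finite_subset)
  hence "v \<in> \<Union>A \<longleftrightarrow> 0 < g v" if "v < n" for v
    using deg_pos_iff[of A v] A(2) that by simp
  moreover have "v < n" if "v \<in> \<Union>A" for v using that A(1) edge_vertex_less by blast
  ultimately show ?thesis by blast
qed

lemma card_Union_le_twice_card:
  assumes "A \<subseteq> all_edges n"
  shows "card (\<Union>A) \<le> 2 * card A"
proof -
  have "card (\<Union>A) \<le> (\<Sum>e\<in>A. card e)" by (rule card_Union_le_sum_card)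
  also have "\<dots> = (\<Sum>e\<in>A. 2)" using assms card_edge by (intro sum.cong) auto
  finally show ?thesis by simp
qed

lemma graphs_with_degrees_Diff_edge:
  assumes "A \<in> graphs_with_degrees n (Suc d) g" "e \<in> A"
  shows "A - {e} \<in> graphs_with_degrees n d (\<lambda>v. g v - (if v \<in> e then 1 else 0))"
proof -
  have "A \<subseteq> all_edges n" using assms by (simp add: graphs_with_degrees_def)
  hence "finite A" using finite_all_edges by (rule finite_subset)
  thus ?thesis using assms by (auto simp: graphs_with_degrees_def deg_Diff_singleton)
qed

lemma graphs_with_degrees_edge_at:
  assumes "A \<in> graphs_with_degrees n d g" "u < n" "0 < g u"
  shows "\<exists>w. {u, w} \<in> A \<and> w \<in> {v. v < n \<and> 0 < g v} - {u}"
proof -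
  have AE: "A \<subseteq> all_edges n" using assms(1) by (simp add: graphs_with_degrees_def)
  have "u \<in> \<Union>A" using Union_graphs_with_degrees[OF assms(1)] assms(2,3) by blast
  then obtain e w where "e \<in> A" "e = {u, w}" "w \<noteq> u"
    using AE edge_through_vertex by blast
  thus ?thesis using Union_graphs_with_degrees[OF assms(1)] by blast
qed

text \<open>Fix a vertex \<open>u\<close> of positive degree. Every graph of the family is determined by the
  other endpoint \<open>w\<close> of a chosen edge at \<open>u\<close>, one of at most \<open>2d+1\<close> vertices, and by the graph
  left after removing \<open>{u, w}\<close>, whose degree sequence depends only on \<open>g\<close>, \<open>u\<close> and \<open>w\<close>.\<close>

lemma card_graphs_with_degrees_Suc_le:
  assumes IH: "\<And>g'. card (graphs_with_degrees n d g') \<le> c"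
  shows "card (graphs_with_degrees n (Suc d) g) \<le> (2 * d + 1) * c"
proof (cases "graphs_with_degrees n (Suc d) g = {}")
  case False
  define S where "S = graphs_with_degrees n (Suc d) g"
  define V where "V = {v. v < n \<and> 0 < g v}"
  obtain A0 where A0: "A0 \<in> S" using False unfolding S_def by blast
  have A0E: "A0 \<subseteq> all_edges n" "card A0 = Suc d" "\<Union>A0 = V"
    using A0 Union_graphs_with_degrees by (auto simp: S_def V_def graphs_with_degrees_def)
  have cV: "card V \<le> 2 * Suc d" using card_Union_le_twice_card[OF A0E(1)] A0E by simp
  have "A0 \<noteq> {}" using A0E(2) by auto
  then obtain e where e: "e \<in> A0" by blast
  then obtain u where "u \<in> e" using A0E(1) by (auto simp: all_edges_def)
  hence u: "u \<in> V" using A0E(3) e by blast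
  define nb where "nb A = (SOME w. {u, w} \<in> A \<and> w \<in> V - {u})" for A
  have nb: "{u, nb A} \<in> A \<and> nb A \<in> V - {u}" if A: "A \<in> S" for A
  proof -
    obtain w where "{u, w} \<in> A \<and> w \<in> V - {u}"
      using graphs_with_degrees_edge_at[of A n "Suc d" g u] A u by (auto simp: S_def V_def)
    thus ?thesis unfolding nb_def by (rule someI)
  qed
  define S' where
    "S' w = graphs_with_degrees n d (\<lambda>v. g v - (if v \<in> {u, w} then 1 else 0))" for w
  have "inj_on (\<lambda>A. (nb A, A - {{u, nb A}})) S"
  proof (rule inj_onI)
    fix A B assume "A \<in> S" "B \<in> S" "(nb A, A - {{u, nb A}}) = (nb B, B - {{u, nb B}})"
    thus "A = B" using nb[of A] nb[of B] by (metis insert_Diff prod.inject)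
  qed
  moreover have "(\<lambda>A. (nb A, A - {{u, nb A}})) ` S \<subseteq> Sigma (V - {u}) S'"
    using nb graphs_with_degrees_Diff_edge unfolding S_def S'_def by fastforce
  moreover have "finite V" unfolding V_def by simp
  ultimately have "card S \<le> card (Sigma (V - {u}) S')"
    by (intro card_inj_on_le) (auto simp: S'_def finite_graphs_with_degrees)
  also have "\<dots> = (\<Sum>w\<in>V - {u}. card (S' w))"
    using \<open>finite V\<close> by (simp add: card_SigmaI S'_def finite_graphs_with_degrees)
  also have "\<dots> \<le> card (V - {u}) * c"
    using sum_mono[of "V - {u}" "\<lambda>w. card (S' w)" "\<lambda>_. c"] IH unfolding S'_def by simp
  also have "\<dots> \<le> (2 * d + 1) * c"
    using cV u \<open>finite V\<close> by (intro mult_le_mono1) (simp add: card_Diff_singleton)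
  finally show ?thesis unfolding S_def .
qed simp

lemma card_graphs_with_degrees_le:
  "card (graphs_with_degrees n d g) \<le> (\<Prod>i<d. 2 * i + 1)"
proof (induction d arbitrary: g)
  case 0
  have "graphs_with_degrees n 0 g \<subseteq> {{}}"
    using finite_all_edges by (auto simp: graphs_with_degrees_def dest: finite_subset)
  hence "card (graphs_with_degrees n 0 g) \<le> card {{} :: nat set set}"
    by (intro card_mono) auto
  thus ?case by simp
next
  case (Suc d)
  thus ?case using card_graphs_with_degrees_Suc_le[OF Suc.IH] by (simp add: mult.commute)
qed

lemma prod_odd_le_power_fact: "(\<Prod>i<d. 2 * i + 1 :: nat) \<le> 2 ^ d * fact d"
proof (induction d)
  case (Suc d)
  have "(\<Prod>i<Suc d. 2 * i + 1 :: nat) = (2 * d + 1) * (\<Prod>i<d. 2 * i + 1)" by simp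
  also have "\<dots> \<le> (2 * d + 2) * (2 ^ d * fact d)" using Suc by (intro mult_mono) auto
  also have "\<dots> = 2 ^ Suc d * fact (Suc d)" by (simp add: algebra_simps)
  finally show ?case .
qed simp

section \<open>Counting \<open>k\<close>-factors near a fixed one\<close>

lemma k_factor_subset: "H \<in> k_factors n k \<Longrightarrow> H \<subseteq> all_edges n"
  by (simp add: k_factors_def is_k_factor_def)

lemma deg_k_factor: "H \<in> k_factors n k \<Longrightarrow> v < n \<Longrightarrow> deg H v = k"
  by (simp add: k_factors_def is_k_factor_def deg_def)

lemma finite_k_factor: "H \<in> k_factors n k \<Longrightarrow> finite H"
  by (rule finite_subset[OF k_factor_subset finite_all_edges])

lemma finite_k_factors: "finite (k_factors n k)"
  by (rule finite_subset[of _ "Pow (all_edges n)"]) (auto dest: k_factor_subset simp: finite_all_edges)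

lemma card_k_factor: "H \<in> k_factors n k \<Longrightarrow> 2 * card H = k * n"
  using sum_deg_eq_twice_card[OF k_factor_subset, of H n k] deg_k_factor[of H n k] by (simp add: mult.commute)

lemma k_factors_0: "k_factors 0 k = {{}}"
  by (auto simp: k_factors_def is_k_factor_def all_edges_def)

lemma deg_Diff_k_factors:
  assumes "H \<in> k_factors n k" "H' \<in> k_factors n k" "v < n"
  shows "deg (H - H') v = deg (H' - H) v"
  using deg_Int_Diff[OF finite_k_factor[OF assms(1)], of v H']
    deg_Int_Diff[OF finite_k_factor[OF assms(2)], of v H]
    deg_k_factor[OF assms(1,3)] deg_k_factor[OF assms(2,3)]
  by (simp add: Int_commute)

lemma card_Diff_k_factors:
  assumes "H \<in> k_factors n k" "H' \<in> k_factors n k"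
  shows "card (H - H') = card (H' - H)"
proof -
  have "2 * card (H - H') = (\<Sum>v<n. deg (H - H') v)"
    using k_factor_subset[OF assms(1)] by (intro sum_deg_eq_twice_card[symmetric]) auto
  also have "\<dots> = (\<Sum>v<n. deg (H' - H) v)" using deg_Diff_k_factors[OF assms] by simp
  also have "\<dots> = 2 * card (H' - H)"
    using k_factor_subset[OF assms(2)] by (intro sum_deg_eq_twice_card) auto
  finally show ?thesis by simp
qed

text \<open>\<open>H\<close> is recovered from \<open>(H\<^sup>* - H, H - H\<^sup>*)\<close>; the first component is a \<open>d\<close>-subset of
  \<open>H\<^sup>*\<close>, the second a graph with \<open>d\<close> edges and the degree sequence of the first.\<close>

lemma card_k_factors_at_distance_le:
  assumes Hs: "Hs \<in> k_factors n k"
  shows "card {H \<in> k_factors n k. card (H - Hs) = d} \<le> (k * n) ^ d"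
proof -
  define T where "T = {H \<in> k_factors n k. card (H - Hs) = d}"
  define Rs where "Rs = {R. R \<subseteq> Hs \<and> card R = d}"
  define As where "As R = graphs_with_degrees n d (deg R)" for R
  have fHs: "finite Hs" using Hs by (rule finite_k_factor)
  have "inj_on (\<lambda>H. (Hs - H, H - Hs)) T"
    by (rule inj_onI) (auto simp: T_def dest: k_factor_subset)
  moreover have "(\<lambda>H. (Hs - H, H - Hs)) ` T \<subseteq> Sigma Rs As"
    using card_Diff_k_factors[OF _ Hs] deg_Diff_k_factors[OF _ Hs] k_factor_subset
    by (fastforce simp: T_def Rs_def As_def graphs_with_degrees_def)
  moreover have "finite Rs" using fHs unfolding Rs_def by simp
  ultimately have "card T \<le> card (Sigma Rs As)"
    by (intro card_inj_on_le) (auto simp: As_def finite_graphs_with_degrees)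
  also have "\<dots> = (\<Sum>R\<in>Rs. card (As R))"
    using \<open>finite Rs\<close> by (simp add: card_SigmaI As_def finite_graphs_with_degrees)
  also have "\<dots> \<le> (\<Sum>R\<in>Rs. 2 ^ d * fact d)"
    unfolding As_def by (intro sum_mono order_trans[OF card_graphs_with_degrees_le prod_odd_le_power_fact])
  also have "\<dots> = 2 ^ d * ((card Hs choose d) * fact d)"
    unfolding Rs_def using n_subsets[OF fHs, of d] by simp
  also have "\<dots> \<le> 2 ^ d * card Hs ^ d" by (intro mult_le_mono2 binomial_fact_pow)
  also have "\<dots> = (k * n) ^ d" using card_k_factor[OF Hs] by (simp flip: power_mult_distrib)
  finally show ?thesis unfolding T_def .
qed

lemma sum_near_k_factors_le:
  fixes q t :: real
  assumes Hs: "Hs \<in> k_factors n k" and q: "0 \<le> q"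
  shows "(\<Sum>H\<in>{H \<in> k_factors n k. real (card (H - Hs)) < t}. q ^ card (H - Hs))
         \<le> (\<Sum>d<nat \<lceil>t\<rceil>. (real (k * n) * q) ^ d)"
proof -
  define D where "D = {H \<in> k_factors n k. real (card (H - Hs)) < t}"
  have fD: "finite D" unfolding D_def using finite_k_factors by simp
  have "(\<Sum>H\<in>D. q ^ card (H - Hs))
      = (\<Sum>H\<in>D. \<Sum>d<nat \<lceil>t\<rceil>. if card (H - Hs) = d then q ^ d else 0)"
    by (intro sum.cong refl) (auto simp: D_def zless_nat_eq_int_zless less_ceiling_iff)
  also have "\<dots> = (\<Sum>d<nat \<lceil>t\<rceil>. real (card {H\<in>D. card (H - Hs) = d}) * q ^ d)"
    using fD by (subst sum.swap) (simp add: sum.If_cases Int_def)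
  also have "\<dots> \<le> (\<Sum>d<nat \<lceil>t\<rceil>. real ((k * n) ^ d) * q ^ d)"
  proof (intro sum_mono mult_right_mono)
    fix d
    have "card {H\<in>D. card (H - Hs) = d} \<le> card {H \<in> k_factors n k. card (H - Hs) = d}"
      using finite_k_factors by (intro card_mono) (auto simp: D_def)
    also have "\<dots> \<le> (k * n) ^ d" by (rule card_k_factors_at_distance_le[OF Hs])
    finally show "real (card {H\<in>D. card (H - Hs) = d}) \<le> real ((k * n) ^ d)"
      by (simp only: of_nat_le_iff)
  qed (use q in simp)
  finally show ?thesis unfolding D_def by (simp add: power_mult_distrib)
qed

lemma loss_less_iff:
  assumes "H \<in> k_factors n k" "Hs \<in> k_factors n k" "0 < n" "0 < k"
  shows "loss n k H Hs < 2 * \<delta> / real k \<longleftrightarrow> real (card (H - Hs)) < \<delta> * real n / 2"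
proof -
  have "card ((H - Hs) \<union> (Hs - H)) = 2 * card (H - Hs)"
    using finite_k_factor[OF assms(1)] finite_k_factor[OF assms(2)] card_Diff_k_factors[OF assms(1,2)]
    by (subst card_Un_disjoint) auto
  hence "loss n k H Hs = 4 * real (card (H - Hs)) / (real k * real n)"
    by (simp add: loss_def field_simps)
  hence "loss n k H Hs < 2 * \<delta> / real k \<longleftrightarrow>
      4 * real (card (H - Hs)) < 2 * \<delta> / real k * (real k * real n)"
    using assms(3,4) by (simp add: pos_divide_less_eq)
  thus ?thesis using assms(4) by (simp add: mult.commute)
qed

lemma geometric_sum_le_powr:
  fixes r x :: real
  assumes r: "1 < r" and x: "0 \<le> x"
  shows "(\<Sum>d<nat \<lceil>x\<rceil>. r ^ d) \<le> r / (r - 1) * r powr x"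
proof -
  have "(\<Sum>d<nat \<lceil>x\<rceil>. r ^ d) = (r ^ nat \<lceil>x\<rceil> - 1) / (r - 1)"
    using r by (simp add: geometric_sum)
  also have "\<dots> \<le> r powr real (nat \<lceil>x\<rceil>) / (r - 1)"
    using r by (intro divide_right_mono) (auto simp: powr_realpow)
  also have "r powr real (nat \<lceil>x\<rceil>) \<le> r powr (x + 1)"
    using r x by (intro powr_mono) linarith+
  finally show ?thesis using r by (simp add: powr_add divide_right_mono mult.commute)
qed

lemma sum_good_k_factors_le:
  fixes p r \<delta> :: real
  assumes Hs: "Hs \<in> k_factors n k" and "0 < k" and p: "0 \<le> p"
    and r: "real k * real n * p \<le> r" "1 < r" and "0 \<le> \<delta>"
  shows "(\<Sum>H\<in>{H \<in> k_factors n k. loss n k H Hs < 2 * \<delta> / real k}. p ^ card (H - Hs))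
         \<le> r / (r - 1) * r powr (\<delta> * real n / 2)"
proof (cases "n = 0")
  case True
  \<comment> \<open>here the loss is a division by zero, and the empty graph is the only factor\<close>
  have "{H \<in> k_factors n k. loss n k H Hs < 2 * \<delta> / real k} \<subseteq> {{}}"
    using True k_factors_0 by auto
  hence "(\<Sum>H\<in>{H \<in> k_factors n k. loss n k H Hs < 2 * \<delta> / real k}. p ^ card (H - Hs))
      \<le> (\<Sum>H\<in>{{}}. p ^ card (H - Hs))"
    using p by (intro sum_mono2) auto
  also have "\<dots> = 1" by simp
  also have "1 \<le> r / (r - 1)" using r by simp
  finally show ?thesis using True r by simp
next
  case False
  hence eq: "{H \<in> k_factors n k. loss n k H Hs < 2 * \<delta> / real k}
       = {H \<in> k_factors n k. real (card (H - Hs)) < \<delta> * real n / 2}"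
    using loss_less_iff[OF _ Hs] \<open>0 < k\<close> by auto
  have "(\<Sum>H\<in>{H \<in> k_factors n k. loss n k H Hs < 2 * \<delta> / real k}. p ^ card (H - Hs))
      \<le> (\<Sum>d<nat \<lceil>\<delta> * real n / 2\<rceil>. (real (k * n) * p) ^ d)"
    unfolding eq by (rule sum_near_k_factors_le[OF Hs p])
  also have "\<dots> \<le> (\<Sum>d<nat \<lceil>\<delta> * real n / 2\<rceil>. r ^ d)"
    using r p by (intro sum_mono power_mono) auto
  also have "\<dots> \<le> r / (r - 1) * r powr (\<delta> * real n / 2)"
    using r \<open>0 \<le> \<delta>\<close> by (intro geometric_sum_le_powr) auto
  finally show ?thesis .
qed

section \<open>The random graph\<close>

lemma prob_G_np_superset:
  assumes S: "S \<subseteq> all_edges n" and p: "0 \<le> p" "p \<le> 1"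
  shows "measure_pmf.prob (G_np n p) {G. S \<subseteq> G} = p ^ card S"
proof -
  let ?B = "\<lambda>e. if e \<in> S then {True} else UNIV"
  have "(\<lambda>f. {e\<in>all_edges n. f e}) -` {G. S \<subseteq> G} = Pi (all_edges n) ?B"
    using S by (auto simp: Pi_def)
  hence "measure_pmf.prob (G_np n p) {G. S \<subseteq> G}
      = (\<Prod>e\<in>all_edges n. measure_pmf.prob (bernoulli_pmf p) (?B e))"
    unfolding G_np_def measure_map_pmf by (simp add: measure_Pi_pmf_Pi finite_all_edges)
  also have "\<dots> = (\<Prod>e\<in>all_edges n. if e \<in> S then p else 1)"
    using p by (intro prod.cong) (auto simp: measure_pmf_single)
  also have "\<dots> = p ^ card S"
    using S finite_all_edges by (simp add: prod.If_cases Int_absorb1)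
  finally show ?thesis .
qed

lemma card_contained_eq_sum_indicator:
  "finite D \<Longrightarrow> real (card {x\<in>D. f x \<subseteq> G}) = (\<Sum>x\<in>D. indicator {G. f x \<subseteq> G} G)"
  by (simp add: indicator_def sum.If_cases Int_def)

lemma integrable_card_contained:
  "finite D \<Longrightarrow> integrable (measure_pmf M) (\<lambda>G. real (card {x\<in>D. f x \<subseteq> G}))"
  by (simp add: card_contained_eq_sum_indicator measure_pmf.emeasure_finite less_top[symmetric])

lemma expectation_card_contained:
  assumes "finite D" "\<And>x. x \<in> D \<Longrightarrow> f x \<subseteq> all_edges n" "0 \<le> p" "p \<le> 1"
  shows "measure_pmf.expectation (G_np n p) (\<lambda>G. real (card {x\<in>D. f x \<subseteq> G}))
         = (\<Sum>x\<in>D. p ^ card (f x))"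
  using assms
  by (simp add: card_contained_eq_sum_indicator measure_pmf.emeasure_finite
      less_top[symmetric] prob_G_np_superset)

lemma prob_le_ge_Markov:
  fixes X :: "'a \<Rightarrow> real"
  assumes "integrable (measure_pmf M) X" "\<And>x. 0 \<le> X x" "0 < B"
  shows "1 - measure_pmf.expectation M X / B \<le> measure_pmf.prob M {x. X x \<le> B}"
proof -
  have "measure_pmf.prob M {x. B \<le> X x} \<le> measure_pmf.expectation M X / B"
    using integral_Markov_inequality_measure[of "measure_pmf M" X UNIV B] assms by simp
  moreover have "measure_pmf.prob M (- {x. B \<le> X x}) \<le> measure_pmf.prob M {x. X x \<le> B}"
    by (intro measure_pmf.finite_measure_mono) auto
  ultimately show ?thesis
    using measure_pmf.prob_compl[of "{x. B \<le> X x}" M] by (simp add: Compl_eq_Diff_UNIV)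
qed

theorem mainTheorem8:
  fixes k n :: nat and lam \<epsilon> \<delta> :: real and Hs :: "nat set set"
  assumes "k \<ge> 1"
    and "even (k * n)"
    and "0 \<le> lam / real n" and "lam / real n \<le> 1"
    and "\<epsilon> > 0"
    and "real k * lam \<ge> 1 + \<epsilon>"
    and "\<delta> > 0"
    and "Hs \<in> k_factors n k"
  shows "measure_pmf.prob (G_np n (lam / real n))
           {G0. real (card (H_good n k \<delta> Hs (G0 \<union> Hs)))
                  \<le> (real k * lam) / (real k * lam - 1) * (real k * lam) powr (\<delta> * real n)}
         \<ge> 1 - (real k * lam) powr (- \<delta> * real n / 2)"
proof -
  define r where "r = real k * lam"
  define p where "p = lam / real n"
  define B where "B = r / (r - 1) * r powr (\<delta> * real n)"
  define D where "D = {H \<in> k_factors n k. loss n k H Hs < 2 * \<delta> / real k}"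
  define X where "X G = real (card {H\<in>D. H - Hs \<subseteq> G})" for G
  have r: "1 < r" using assms(5,6) unfolding r_def by linarith
  have good: "H_good n k \<delta> Hs (G \<union> Hs) = {H\<in>D. H - Hs \<subseteq> G}" for G
    by (auto simp: H_good_def D_def)
  have int: "integrable (measure_pmf (G_np n p)) X"
    unfolding X_def[abs_def] by (rule integrable_card_contained) (simp add: D_def finite_k_factors)
  have "measure_pmf.expectation (G_np n p) X = (\<Sum>H\<in>D. p ^ card (H - Hs))"
    unfolding X_def[abs_def] using assms(3,4)
    by (intro expectation_card_contained) (auto simp: D_def p_def finite_k_factors dest!: k_factor_subset)
  also have "\<dots> \<le> r / (r - 1) * r powr (\<delta> * real n / 2)"
    unfolding D_def using assms(1,3,7,8) r
    by (intro sum_good_k_factors_le) (auto simp: r_def p_def)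
  finally have "measure_pmf.expectation (G_np n p) X / B \<le> r / (r - 1) * r powr (\<delta> * real n / 2) / B"
    using r by (intro divide_right_mono) (auto simp: B_def)
  also have "\<dots> = r powr (- \<delta> * real n / 2)"
    using r by (simp add: B_def powr_diff[symmetric])
  finally have "1 - r powr (- \<delta> * real n / 2) \<le> 1 - measure_pmf.expectation (G_np n p) X / B"
    by simp
  also have "\<dots> \<le> measure_pmf.prob (G_np n p) {G. X G \<le> B}"
    using int r by (intro prob_le_ge_Markov) (auto simp: X_def B_def)
  also have "{G. X G \<le> B} = {G. real (card (H_good n k \<delta> Hs (G \<union> Hs))) \<le> B}"
    using good by (simp add: X_def)
  finally show ?thesis unfolding B_def r_def p_def .
qed

end
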